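(* Let $p$ be a prime and $m\geq 2$ an integer. For real $x$ let $\omega=\frac{x+\sqrt{x^2+4}}{2}$, and let $i=\sqrt{-1}$. (a) If $p=2$ and $2\mid m$, then $\Psi_{2m}(x)=-i^{\varphi(m)}\Psi_m\!\left(i\omega^2-(i\omega^2)^{-1}\right)=-i^{\varphi(m)}\Psi_m(i(x^2+2))$ when $m=2$, and $\Psi_{2m}(x)=i^{\varphi(m)}\Psi_m\!\left(i\omega^2-(i\omega^2)^{-1}\right)=i^{\varphi(m)}\Psi_m(i(x^2+2))$ when $m\geq3$. (b) If $p=2$ and $2\nmid m$, then $\Psi_{2m}(x)=i^{\varphi(m)}\Psi_m\!\left(i\omega-(i\omega)^{-1}\right)=i^{\varphi(m)}\Psi_m\!\left(i\sqrt{x^2+4}\right)$. (c) If $p>2$ and $p\mid m$, then $\Psi_{pm}(x)=\Psi_m(\omega^p-\omega^{-p})=\Psi_m(x\Psi_{2p}(x))$. (d) If $p>2$ and $p\nmid m$, then $\Psi_{pm}(x)=\dfrac{\Psi_m(\omega^p-\omega^{-p})}{\Psi_m(\omega-\omega^{-1})}=\dfrac{\Psi_m(x\Psi_{2p}(x))}{\Psi_m(x)}$.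
   Context: The Fibonacci polynomials are defined by $F_1(x)=1$, $F_2(x)=x$, and $F_n(x)=xF_{n-1}(x)+F_{n-2}(x)$ for $n\geq 3$. For $n\geq 2$, the $n$-th fibotomic polynomial $\Psi_n(x)\in\mathbb{Z}[x]$ is the product of the monic irreducible factors of $F_n(x)$ which are not factors of $F_k(x)$ for any $k<n$; also $\Psi_1(x)=1$. Thus $F_n(x)=\prod_{d\mid n}\Psi_d(x)$ for all $n\geq1$. $\varphi$ is Euler's totient function. *)

theory Defs
  imports Complex_Main "HOL-Computational_Algebra.Polynomial" "HOL-Number_Theory.Number_Theory"
begin

fun fibpoly :: "nat \<Rightarrow> int poly" where
  "fibpoly 0 = 0"
| "fibpoly (Suc 0) = 1"
| "fibpoly (Suc (Suc n)) = [:0, 1:] * fibpoly (Suc n) + fibpoly n"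

definition fibotomic :: "nat \<Rightarrow> int poly" where
  "fibotomic n = (\<Prod> q \<in> {q :: int poly. lead_coeff q = 1 \<and> irreducible q \<and>
       q dvd fibpoly n \<and> (\<forall>k. 1 \<le> k \<and> k < n \<longrightarrow> \<not> q dvd fibpoly k)}. q)"

definition PsiR :: "nat \<Rightarrow> real \<Rightarrow> real" where
  "PsiR n x = poly (map_poly real_of_int (fibotomic n)) x"

definition PsiC :: "nat \<Rightarrow> complex \<Rightarrow> complex" where
  "PsiC n z = poly (map_poly complex_of_int (fibotomic n)) z"

definition omega :: "real \<Rightarrow> real" where
  "omega x = (x + sqrt (x ^ 2 + 4)) / 2"

end

theory Submission
  imports Defs "HOL-Computational_Algebra.Polynomial_Factorial"
    "HOL-Computational_Algebra.Fundamental_Theorem_Algebra"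
begin

text \<open>
  With \<open>w v = -1\<close>, Binet's formula reads \<open>F\<^sub>n(w + v) (w - v) = w\<^sup>n - v\<^sup>n\<close>; taking
  \<open>w = \<i> e\<^sup>i\<^sup>t\<close> shows that the roots of \<open>F\<^sub>n\<close> are the \<open>n - 1\<close> distinct numbers
  \<open>2\<i> cos(k\<pi>/n)\<close>, \<open>0 < k < n\<close>. An irreducible integer polynomial divides every integer
  polynomial with which it shares a complex root, so \<open>\<Psi>\<^sub>n\<close> is the monic polynomial whose
  roots are the primitive ones, \<open>k\<close> coprime to \<open>n\<close>, and it has degree \<open>\<phi>(n)\<close>.

  Each identity of the theorem then compares two polynomials of the same degree that vanish on
  the same \<open>\<phi>\<close>-many primitive roots: the substitution \<open>x \<mapsto> \<i>(x\<^sup>2 + 2)\<close> maps the primitive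
  roots of order \<open>2m\<close> to those of order \<open>m\<close>, and \<open>L(x) = x \<Psi>\<^sub>2\<^sub>p(x)\<close>, which satisfies
  \<open>L(w + v) = w\<^sup>p + v\<^sup>p\<close>, maps those of order \<open>pm\<close> (and, when \<open>p\<close> does not divide \<open>m\<close>,
  also those of order \<open>m\<close>) to those of order \<open>m\<close>. For odd \<open>m\<close> the roots of \<open>\<Psi>\<^sub>m\<close> come in
  pairs \<open>\<plusminus>2\<i> cos(k\<pi>/m)\<close>, so \<open>\<Psi>\<^sub>m(y)\<close> is a product of factors \<open>y\<^sup>2 + 4 cos\<^sup>2(k\<pi>/m)\<close>, and
  \<open>k \<mapsto> m - 2k\<close> turns those at \<open>y = \<i>\<surd>(x\<^sup>2 + 4)\<close> into the factors of \<open>\<Psi>\<^sub>2\<^sub>m(x)\<close>. For real \<open>x\<close>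
  one takes \<open>w = \<omega>\<close>, \<open>v = -1/\<omega>\<close>.
\<close>

lemma map_poly_of_int_add:
  "map_poly (of_int :: int \<Rightarrow> 'a::comm_ring_1) (p + q) = map_poly of_int p + map_poly of_int q"
  by (rule poly_eqI) (simp add: coeff_map_poly)

lemma map_poly_of_int_mult:
  "map_poly (of_int :: int \<Rightarrow> 'a::comm_ring_1) (p * q) = map_poly of_int p * map_poly of_int q"
  by (rule poly_eqI) (simp add: coeff_map_poly coeff_mult)

lemma map_poly_of_int_smult:
  "map_poly (of_int :: int \<Rightarrow> 'a::comm_ring_1) (Polynomial.smult c p)
    = Polynomial.smult (of_int c) (map_poly of_int p)"
  by (rule poly_eqI) (simp add: coeff_map_poly)

lemma map_poly_of_int_prod:
  "map_poly (of_int :: int \<Rightarrow> 'a::comm_ring_1) (prod f A) = (\<Prod>a\<in>A. map_poly of_int (f a))"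
  by (induction A rule: infinite_finite_induct) (auto simp: map_poly_of_int_mult)

lemma map_poly_of_int_prod_mset:
  "map_poly (of_int :: int \<Rightarrow> 'a::comm_ring_1) (prod_mset M) = prod_mset (image_mset (map_poly of_int) M)"
  by (induction M) (auto simp: map_poly_of_int_mult)

lemma map_poly_of_int_dvd:
  "p dvd q \<Longrightarrow> map_poly (of_int :: int \<Rightarrow> 'a::comm_ring_1) p dvd map_poly of_int q"
  by (auto simp: dvd_def map_poly_of_int_mult)

lemma degree_map_poly_of_int [simp]:
  "degree (map_poly (of_int :: int \<Rightarrow> 'a::ring_char_0) p) = degree p"
  by (simp add: degree_map_poly)

text \<open>Stated with \<open>degree p\<close> rather than with \<open>lead_coeff\<close>, so that the simplifier can
  still use it after \<open>degree_map_poly_of_int\<close> has rewritten the degree.\<close>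

lemma lead_coeff_map_poly_of_int [simp]:
  "poly.coeff (map_poly (of_int :: int \<Rightarrow> 'a::ring_char_0) p) (degree p) = of_int (lead_coeff p)"
  by (simp add: coeff_map_poly)

lemma of_real_poly_map_poly_of_int:
  "of_real (poly (map_poly of_int p) x)
    = poly (map_poly (of_int :: int \<Rightarrow> 'a::{real_algebra_1, comm_ring_1}) p) (of_real x)"
  by (induction p) (auto simp: map_poly_pCons)

abbreviation cpoly :: "int poly \<Rightarrow> complex poly" where
  "cpoly \<equiv> map_poly of_int"

section \<open>Polynomials with prescribed simple roots\<close>

lemma poly_eq_smult_prod_roots:
  fixes P :: "'a::idom poly"
  assumes "finite K" "inj_on r K" "card K = degree P" "\<And>k. k \<in> K \<Longrightarrow> poly P (r k) = 0"
  shows "P = Polynomial.smult (lead_coeff P) (\<Prod>k\<in>K. [:- r k, 1:])"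
proof -
  have deg: "degree (\<Prod>k\<in>K. [:- r k, 1:]) = degree P"
    using assms(1,3) by (simp add: degree_prod_eq_sum_degree)
  show ?thesis
  proof (rule poly_eqI_degree_lead_coeff[where n = "degree P" and A = "r ` K"])
    show "poly.coeff P (degree P)
        = poly.coeff (Polynomial.smult (lead_coeff P) (\<Prod>k\<in>K. [:- r k, 1:])) (degree P)"
      using deg by (simp add: lead_coeff_prod flip: deg)
    show "card (r ` K) \<ge> degree P" using assms(2,3) by (simp add: card_image)
  qed (use deg assms(1,4) in \<open>auto simp: poly_prod\<close>)
qed

lemma poly_prod_linear_factors:
  "poly (\<Prod>k\<in>K. [:- r k, 1:]) z = (\<Prod>k\<in>K. z - r k :: 'a::comm_ring_1)"
  by (simp add: poly_prod)

corollary poly_eq_lead_coeff_prod_roots: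
  fixes P :: "'a::idom poly"
  assumes "finite K" "inj_on r K" "card K = degree P" "\<And>k. k \<in> K \<Longrightarrow> poly P (r k) = 0"
  shows "poly P z = lead_coeff P * (\<Prod>k\<in>K. z - r k)"
proof -
  have "poly P z = poly (Polynomial.smult (lead_coeff P) (\<Prod>k\<in>K. [:- r k, 1:])) z"
    using poly_eq_smult_prod_roots[OF assms] by (rule arg_cong)
  then show ?thesis by (simp only: poly_smult poly_prod_linear_factors)
qed

lemma order_prod_linear:
  fixes r :: "'b \<Rightarrow> 'a::idom"
  assumes "finite K"
  shows "Polynomial.order a (\<Prod>k\<in>K. [:- r k, 1:]) = card {k \<in> K. r k = a}"
  using assms
proof (induction K rule: finite_induct)
  case (insert j K)
  have "(\<Prod>k\<in>K. [:- r k, 1:]) \<noteq> 0"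
    using insert.hyps(1) by (simp add: prod_zero_iff)
  then have "[:- r j, 1:] * (\<Prod>k\<in>K. [:- r k, 1:]) \<noteq> 0"
    by (metis mult_eq_0_iff pCons_eq_0_iff one_neq_zero)
  then have "Polynomial.order a (\<Prod>k\<in>insert j K. [:- r k, 1:])
      = Polynomial.order a [:- r j, 1:] + Polynomial.order a (\<Prod>k\<in>K. [:- r k, 1:])"
    by (simp only: prod.insert[OF insert.hyps]) (rule order_mult)
  moreover have "Polynomial.order a [:- r j, 1:] = (if r j = a then 1 else 0)"
  proof (cases "r j = a")
    case True
    then show ?thesis using order_power_n_n[of a 1] by simp
  next
    case False
    then show ?thesis by (simp add: order_0I)
  qed
  moreover have "card {k \<in> insert j K. r k = a} = (if r j = a then 1 else 0) + card {k \<in> K. r k = a}"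
  proof -
    have "{k \<in> insert j K. r k = a} = (if r j = a then insert j {k \<in> K. r k = a} else {k \<in> K. r k = a})"
      by auto
    then show ?thesis using insert.hyps by simp
  qed
  ultimately show ?case using insert.IH by simp
qed simp

lemma rsquarefree_prod_linear:
  assumes "finite K" "inj_on r K"
  shows "rsquarefree (\<Prod>k\<in>K. [:- r k, 1:] :: 'a::idom poly)"
proof -
  have "card {k \<in> K. r k = a} \<le> Suc 0" for a
    using assms by (subst card_le_Suc0_iff_eq) (auto dest: inj_onD)
  then have "Polynomial.order a (\<Prod>k\<in>K. [:- r k, 1:] :: 'a poly) \<le> 1" for a
    using assms(1) by (simp add: order_prod_linear)
  moreover have "(\<Prod>k\<in>K. [:- r k, 1:] :: 'a poly) \<noteq> 0"
    using assms(1) by (simp add: prod_zero_iff)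
  ultimately show ?thesis
    unfolding rsquarefree_def by (metis le_neq_implies_less less_one)
qed

lemma rsquarefree_dvd:
  assumes "rsquarefree q" "p dvd q"
  shows "rsquarefree p"
  unfolding rsquarefree_def
proof (intro conjI allI)
  have "q \<noteq> 0" using assms(1) by (simp add: rsquarefree_def)
  then show "p \<noteq> 0" using assms(2) by auto
  fix a
  have "Polynomial.order a p \<le> Polynomial.order a q"
    using \<open>q \<noteq> 0\<close> assms(2) by (rule dvd_imp_order_le)
  moreover have "Polynomial.order a q = 0 \<or> Polynomial.order a q = 1"
    using assms(1) by (simp add: rsquarefree_def)
  ultimately show "Polynomial.order a p = 0 \<or> Polynomial.order a p = 1"
    by arith
qed

section \<open>Fibonacci polynomials and their roots\<close>

lemma lead_coeff_degree_fibpoly: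
  "n \<ge> 1 \<Longrightarrow> lead_coeff (fibpoly n) = 1 \<and> degree (fibpoly n) = n - 1"
proof (induction n rule: fibpoly.induct)
  case (3 n)
  show ?case
  proof (cases n)
    case (Suc k)
    with 3 have lead: "lead_coeff (fibpoly (Suc n)) = 1" and deg: "degree (fibpoly (Suc n)) = n"
      and deg': "degree (fibpoly n) = n - 1" by auto
    then have "fibpoly (Suc n) \<noteq> 0" by auto
    then have "degree ([:0, 1:] * fibpoly (Suc n)) = Suc n"
      and "lead_coeff ([:0, 1:] * fibpoly (Suc n)) = 1"
      using lead deg by (simp_all add: degree_mult_eq lead_coeff_mult)
    moreover have "degree (fibpoly n) < Suc n" using deg' by simp
    ultimately show ?thesis by (simp add: degree_add_eq_left coeff_eq_0)
  qed simp
qed auto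

lemma fibpoly_Binet:
  fixes w v :: "'a::comm_ring_1"
  assumes "w * v = -1"
  shows "poly (map_poly of_int (fibpoly n)) (w + v) * (w - v) = w ^ n - v ^ n"
proof (induction n rule: fibpoly.induct)
  case (3 n)
  have cancel: "w * v ^ Suc n = -(v ^ n)" "v * w ^ Suc n = -(w ^ n)"
    using assms by (simp_all add: algebra_simps flip: mult.assoc)
  have "map_poly of_int (fibpoly (Suc (Suc n)))
      = [:0, 1:] * map_poly (of_int :: int \<Rightarrow> 'a) (fibpoly (Suc n)) + map_poly of_int (fibpoly n)"
    by (simp only: fibpoly.simps map_poly_of_int_add map_poly_of_int_mult) (simp add: map_poly_pCons)
  then have "poly (map_poly of_int (fibpoly (Suc (Suc n)))) (w + v) * (w - v)
      = (w + v) * (poly (map_poly of_int (fibpoly (Suc n))) (w + v) * (w - v))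
        + poly (map_poly of_int (fibpoly n)) (w + v) * (w - v)"
    by (simp add: algebra_simps)
  also have "\<dots> = (w + v) * (w ^ Suc n - v ^ Suc n) + (w ^ n - v ^ n)"
    using 3 by simp
  also have "\<dots> = w ^ Suc (Suc n) - v ^ Suc (Suc n)"
    using cancel by (simp add: algebra_simps)
  finally show ?case .
qed auto

definition fib_root :: "nat \<Rightarrow> nat \<Rightarrow> complex" where
  "fib_root n k = \<i> * of_real (2 * cos (real k * pi / real n))"

lemma i_cis_pair:
  fixes t :: real and p :: nat
  defines "w \<equiv> \<i> * cis t" and "v \<equiv> \<i> * cis (- t)"
  shows "w * v = -1" and "w + v = \<i> * of_real (2 * cos t)" and "w - v = of_real (- 2 * sin t)"
    and "w ^ p - v ^ p = \<i> ^ p * \<i> * of_real (2 * sin (real p * t))"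
    and "w ^ p + v ^ p = \<i> ^ p * of_real (2 * cos (real p * t))"
proof -
  have cis_add: "cis s + cis (- s) = of_real (2 * cos s)" for s
    by (simp add: complex_eq_iff)
  have cis_diff: "cis s - cis (- s) = \<i> * of_real (2 * sin s)" for s
    by (simp add: complex_eq_iff)
  have "w * v = (\<i> * \<i>) * (cis t * cis (- t))" by (simp add: w_def v_def algebra_simps)
  then show "w * v = -1" by (simp add: cis_mult)
  have "w + v = \<i> * (cis t + cis (- t))" "w - v = \<i> * (cis t - cis (- t))"
    by (simp_all add: w_def v_def algebra_simps)
  then show "w + v = \<i> * of_real (2 * cos t)" "w - v = of_real (- 2 * sin t)"
    by (simp_all only: cis_add cis_diff) simp
  have pow: "w ^ p = \<i> ^ p * cis (real p * t)" "v ^ p = \<i> ^ p * cis (- (real p * t))"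
    by (simp_all add: w_def v_def power_mult_distrib DeMoivre)
  have "w ^ p - v ^ p = \<i> ^ p * (cis (real p * t) - cis (- (real p * t)))"
    "w ^ p + v ^ p = \<i> ^ p * (cis (real p * t) + cis (- (real p * t)))"
    by (simp_all add: pow algebra_simps)
  then show "w ^ p - v ^ p = \<i> ^ p * \<i> * of_real (2 * sin (real p * t))"
    "w ^ p + v ^ p = \<i> ^ p * of_real (2 * cos (real p * t))"
    by (simp_all only: cis_add cis_diff mult.assoc)
qed

lemma fib_root_eq_i_cis_pair:
  "fib_root n k = \<i> * cis (real k * pi / real n) + \<i> * cis (- (real k * pi / real n))"
  by (simp add: fib_root_def i_cis_pair(2))

lemma poly_fibpoly_fib_root:
  assumes "1 \<le> k" "k < n"
  shows "poly (cpoly (fibpoly n)) (fib_root n k) = 0"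
proof -
  define t where "t = real k * pi / real n"
  have "sin t > 0"
    unfolding t_def using assms by (intro sin_gt_zero) (auto simp: field_simps)
  then have "\<i> * cis t - \<i> * cis (- t) \<noteq> 0"
    by (simp add: i_cis_pair(3))
  moreover have "(\<i> * cis t) ^ n - (\<i> * cis (- t)) ^ n = 0"
    using assms by (simp add: i_cis_pair(4) t_def)
  ultimately show ?thesis
    using fibpoly_Binet[OF i_cis_pair(1)[of t], of n] by (simp add: fib_root_eq_i_cis_pair t_def)
qed

lemma fib_root_eqD:
  assumes "n > 0" "m > 0" "j \<le> n" "k \<le> m" "fib_root n j = fib_root m k"
  shows "j * m = k * n"
proof -
  have le_pi: "real a * pi / real b \<le> pi" if "a \<le> b" "b > 0" for a b :: nat
    using that by (simp add: pos_divide_le_eq mult_right_mono)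
  have "cos (real j * pi / real n) = cos (real k * pi / real m)"
    using assms(5) by (simp add: fib_root_def)
  then have "real j * pi / real n = real k * pi / real m"
    by (intro cos_inj_pi[OF _ le_pi[OF assms(3,1)] _ le_pi[OF assms(4,2)]]) auto
  then have "real j * real m = real k * real n"
    using assms(1,2) by (simp add: field_simps)
  then show ?thesis by (metis of_nat_eq_iff of_nat_mult)
qed

lemma inj_on_fib_root:
  assumes "n > 0" shows "inj_on (fib_root n) {..n}"
proof (rule inj_onI)
  fix j k assume "j \<in> {..n}" "k \<in> {..n}" "fib_root n j = fib_root n k"
  then have "j * n = k * n" using assms by (intro fib_root_eqD) auto
  then show "j = k" using assms by simp
qed

lemma fib_root_scale: "g > 0 \<Longrightarrow> fib_root (d * g) (k * g) = fib_root d k"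
  by (simp add: fib_root_def)

lemma fib_root_mod:
  assumes "n > 0" shows "fib_root n (k mod (2 * n)) = fib_root n k"
proof -
  have "real k * pi / real n = real (k mod (2 * n)) * pi / real n + 2 * real (k div (2 * n)) * pi"
    using assms by (subst (1) div_mult_mod_eq[of k "2 * n", symmetric]) (simp add: field_simps)
  moreover have "cos (x + 2 * real q * pi) = cos x" for x and q :: nat
    by (simp add: cos_add)
  ultimately show ?thesis by (simp add: fib_root_def)
qed

lemma fib_root_reflect:
  assumes "n > 0" "k \<le> 2 * n" shows "fib_root n (2 * n - k) = fib_root n k"
proof -
  have "real (2 * n - k) * pi / real n = 2 * pi - real k * pi / real n"
    using assms by (simp add: field_simps of_nat_diff)
  then show ?thesis by (simp add: fib_root_def)
qed

lemma fib_root_add: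
  assumes "n > 0" shows "fib_root n (k + n) = - fib_root n k"
proof -
  have "real (k + n) * pi / real n = real k * pi / real n + pi"
    using assms by (simp add: field_simps)
  then show ?thesis by (simp add: fib_root_def)
qed

lemma fib_root_complement:
  assumes "n > 0" "k \<le> n" shows "fib_root n (n - k) = - fib_root n k"
proof -
  have "real (n - k) * pi / real n = pi - real k * pi / real n"
    using assms by (simp add: field_simps of_nat_diff)
  then show ?thesis by (simp add: fib_root_def)
qed

lemma fib_root_square: "fib_root n k ^ 2 = - of_real (4 * cos (real k * pi / real n) ^ 2)"
  by (simp add: fib_root_def power_mult_distrib)

lemma cpoly_fibpoly_eq_prod:
  assumes "n \<ge> 1"
  shows "cpoly (fibpoly n) = (\<Prod>k\<in>{1..<n}. [:- fib_root n k, 1:])"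
proof -
  have lead: "lead_coeff (cpoly (fibpoly n)) = 1"
    using lead_coeff_degree_fibpoly[OF assms, THEN conjunct1] by simp
  have "cpoly (fibpoly n)
      = Polynomial.smult (lead_coeff (cpoly (fibpoly n))) (\<Prod>k\<in>{1..<n}. [:- fib_root n k, 1:])"
  proof (rule poly_eq_smult_prod_roots)
    show "inj_on (fib_root n) {1..<n}"
      using assms by (intro inj_on_subset[OF inj_on_fib_root]) auto
    show "card {1..<n} = degree (cpoly (fibpoly n))"
      using lead_coeff_degree_fibpoly[OF assms] by simp
  qed (use poly_fibpoly_fib_root in auto)
  then show ?thesis by (simp only: lead smult_1_left)
qed

lemma poly_fibpoly_eq_prod:
  "n \<ge> 1 \<Longrightarrow> poly (cpoly (fibpoly n)) z = (\<Prod>k\<in>{1..<n}. z - fib_root n k)"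
  by (simp add: cpoly_fibpoly_eq_prod poly_prod_linear_factors)

lemma poly_fibpoly_eq_0_iff:
  "n \<ge> 1 \<Longrightarrow> poly (cpoly (fibpoly n)) z = 0 \<longleftrightarrow> (\<exists>k\<in>{1..<n}. z = fib_root n k)"
  by (simp add: poly_fibpoly_eq_prod prod_zero_iff)

section \<open>Integer polynomials with a common complex root\<close>

lemma poly_pseudo_mod_eq_0:
  fixes A B :: "int poly"
  assumes "B \<noteq> 0" "poly (cpoly A) z = 0" "poly (cpoly B) z = 0"
  shows "poly (cpoly (pseudo_mod A B)) z = 0"
proof -
  obtain a s where "Polynomial.smult a A = B * s + pseudo_mod A B"
    using pseudo_mod(1)[OF assms(1)] by blast
  then have "cpoly (Polynomial.smult a A) = cpoly B * cpoly s + cpoly (pseudo_mod A B)"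
    by (simp only: map_poly_of_int_add map_poly_of_int_mult)
  then show ?thesis using assms(2,3)
    by (metis add_0 mult_zero_left mult_zero_right poly_add poly_mult poly_smult map_poly_of_int_smult)
qed

lemma degree_pos_of_root:
  fixes q :: "int poly"
  assumes "q \<noteq> 0" "poly (cpoly q) z = 0"
  shows "degree q > 0"
proof (rule ccontr)
  assume "\<not> degree q > 0"
  then obtain c where "q = [:c:]" by (metis degree_eq_zeroE neq0_conv)
  with assms show False by (simp add: map_poly_pCons)
qed

lemma irreducible_degree_le_of_common_root:
  fixes q r :: "int poly"
  assumes q: "irreducible q" "poly (cpoly q) z = 0"
  shows "r \<noteq> 0 \<Longrightarrow> poly (cpoly r) z = 0 \<Longrightarrow> degree q \<le> degree r"
proof (induction "degree r" arbitrary: r rule: less_induct)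
  case (less r)
  obtain a s where as: "a \<noteq> 0" "Polynomial.smult a q = r * s + pseudo_mod q r"
    using pseudo_mod(1)[OF less.prems(1)] by blast
  show ?case
  proof (cases "pseudo_mod q r = 0")
    case False
    then have "degree (pseudo_mod q r) < degree r"
      using pseudo_mod(2)[OF less.prems(1), of q] by simp
    moreover have "poly (cpoly (pseudo_mod q r)) z = 0"
      using poly_pseudo_mod_eq_0 less.prems q(2) by blast
    ultimately show ?thesis using less.hyps False by fastforce
  next
    case True
    have "q dvd r * s"
      using as(2) True by (metis add_0_right dvd_triv_right mult_smult_left mult_1 smult_dvd_iff)
    then have "q dvd r \<or> q dvd s"
      using q(1) by (simp add: prime_elem_dvd_mult_iff prime_elem_iff_irreducible)
    then show ?thesis
    proof
      assume "q dvd r"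
      then show ?thesis using less.prems(1) by (rule dvd_imp_degree_le)
    next
      assume "q dvd s"
      then obtain u where "s = q * u" by blast
      then have "[:a:] * q = (r * u) * q" using as(2) True by (simp add: ac_simps)
      moreover have "q \<noteq> 0" using q(1) by auto
      ultimately have "[:a:] = r * u" by (metis mult_right_cancel)
      then have "degree r = 0" using as(1) less.prems(1)
        by (metis degree_mult_eq degree_pCons_0 add_is_0 mult_zero_right pCons_eq_0_iff)
      then show ?thesis using degree_pos_of_root[OF less.prems] by simp
    qed
  qed
qed

lemma irreducible_dvd_of_common_root:
  fixes q G :: "int poly"
  assumes "irreducible q" "poly (cpoly q) z = 0" "poly (cpoly G) z = 0"
  shows "q dvd G"
proof -
  have "q \<noteq> 0" using assms(1) by auto
  obtain a s where as: "a \<noteq> 0" "Polynomial.smult a G = q * s + pseudo_mod G q"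
    using pseudo_mod(1)[OF \<open>q \<noteq> 0\<close>] by blast
  have "pseudo_mod G q = 0"
  proof (rule ccontr)
    assume nz: "pseudo_mod G q \<noteq> 0"
    then have "degree (pseudo_mod G q) < degree q"
      using pseudo_mod(2)[OF \<open>q \<noteq> 0\<close>, of G] by simp
    moreover have "degree q \<le> degree (pseudo_mod G q)"
      using irreducible_degree_le_of_common_root[OF assms(1,2) nz]
        poly_pseudo_mod_eq_0[OF \<open>q \<noteq> 0\<close> assms(3,2)] by blast
    ultimately show False by simp
  qed
  then have "q dvd [:a:] * G"
    using as(2) by (metis add_0_right dvd_triv_left mult_smult_left mult_1 smult_one)
  moreover have "\<not> q dvd [:a:]"
    using degree_pos_of_root[OF \<open>q \<noteq> 0\<close> assms(2)] as(1) by (auto dest: dvd_imp_degree_le)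
  ultimately show ?thesis
    using assms(1) by (metis prime_elem_dvd_mult_iff prime_elem_iff_irreducible)
qed

lemma lead_coeff_prime_dvd_monic:
  fixes q G :: "int poly"
  assumes "prime q" "q dvd G" "lead_coeff G = 1"
  shows "lead_coeff q = 1"
proof -
  obtain h where "G = q * h" using assms(2) by blast
  then have "lead_coeff q * lead_coeff h = 1" using assms(3) by (simp add: lead_coeff_mult)
  then have "lead_coeff q = 1 \<or> lead_coeff q = -1" using zmult_eq_1_iff by blast
  moreover have "unit_factor q = 1"
    using assms(1) unit_factor_normalize[of q] by (simp add: normalize_prime)
  then have "sgn (lead_coeff q) = 1"
    by (simp add: unit_factor_poly_def unit_factor_int_def one_pCons)
  ultimately show ?thesis by auto
qed

lemma monic_prime_factor_with_root:
  fixes G :: "int poly"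
  assumes "lead_coeff G = 1" "poly (cpoly G) z = 0"
  obtains q where "prime q" "q dvd G" "lead_coeff q = 1" "poly (cpoly q) z = 0"
proof -
  have "G \<noteq> 0" using assms(1) by auto
  define P where "P = prod_mset (prime_factorization G)"
  have "normalize G = G"
    using assms(1) by (simp add: normalize_poly_eq_map_poly map_poly_idI)
  then have "P = unit_factor P * G"
    using unit_factor_mult_normalize[of P] prod_mset_prime_factorization_weak[OF \<open>G \<noteq> 0\<close>]
    by (simp add: P_def)
  then have "poly (cpoly P) z = 0"
    using assms(2) by (metis map_poly_of_int_mult poly_mult mult_zero_right)
  then have "(\<Prod>q\<in>#prime_factorization G. poly (cpoly q) z) = 0"
    by (simp add: P_def map_poly_of_int_prod_mset poly_prod_mset)
  then obtain q where "q \<in># prime_factorization G" "poly (cpoly q) z = 0"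
    by (auto simp: prod_mset_zero_iff)
  with assms(1) show thesis
    by (meson that in_prime_factors_imp_dvd in_prime_factors_imp_prime lead_coeff_prime_dvd_monic)
qed

lemma monic_irreducible_imp_prime:
  fixes q :: "int poly"
  assumes "lead_coeff q = 1" "irreducible q"
  shows "prime q"
  using assms by (simp add: prime_def prime_elem_iff_irreducible normalize_poly_eq_map_poly map_poly_idI)

lemma prod_primes_dvd:
  fixes G :: "'a::factorial_semiring"
  assumes "finite Q" "\<And>q. q \<in> Q \<Longrightarrow> prime q \<and> q dvd G"
  shows "\<Prod>Q dvd G"
  using assms
proof (induction Q rule: finite_induct)
  case (insert x Q)
  then obtain E where E: "G = \<Prod>Q * E" by blast
  have "\<not> x dvd \<Prod>Q"
  proof
    assume "x dvd \<Prod>Q"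
    then obtain y where "y \<in> Q" "x dvd y"
      using insert by (auto simp: prime_dvd_prod_iff)
    then have "x = y" using insert.prems by (intro primes_dvd_imp_eq) auto
    then show False using \<open>y \<in> Q\<close> insert.hyps(2) by simp
  qed
  then have "x dvd E"
    using insert.prems E by (metis insertI1 prime_dvd_mult_iff)
  then show ?case using E insert.hyps by (auto simp: mult_ac)
qed simp

section \<open>The roots of the fibotomic polynomials\<close>

lemma fib_root_reduce:
  assumes "1 \<le> k" "k < n" "\<not> coprime k n"
  obtains d j where "1 \<le> j" "j < d" "d < n" "fib_root n k = fib_root d j"
proof -
  define g where "g = gcd k n"
  have "g > 1"
    using assms unfolding g_def
    by (metis coprime_iff_gcd_eq_1 gcd_pos_nat less_one nat_neq_iff not_one_le_zero)
  obtain d j where n: "n = d * g" and k: "k = j * g"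
    unfolding g_def by (metis dvd_div_mult_self gcd_dvd1 gcd_dvd2)
  show thesis
  proof (rule that)
    show "1 \<le> j" "j < d" using assms(1,2) \<open>g > 1\<close> by (auto simp: n k)
    then show "d < n" using \<open>g > 1\<close> by (simp add: n)
    show "fib_root n k = fib_root d j" using \<open>g > 1\<close> by (simp add: n k fib_root_scale)
  qed
qed

lemma fib_root_totative_neq:
  assumes "k \<in> totatives n" "1 \<le> j" "j < d" "d < n"
  shows "fib_root n k \<noteq> fib_root d j"
proof
  assume "fib_root n k = fib_root d j"
  then have "k * d = j * n"
    using assms by (intro fib_root_eqD) (auto simp: in_totatives_iff)
  then have "n dvd k * d" by (metis dvd_triv_right)
  then have "n dvd d"
    using assms(1) by (simp add: in_totatives_iff coprime_dvd_mult_right_iff coprime_commute)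
  then show False using assms(2-4) by (auto dest: dvd_imp_le)
qed

definition primitive_factors :: "nat \<Rightarrow> int poly set" where
  "primitive_factors n = {q. lead_coeff q = 1 \<and> irreducible q \<and>
     q dvd fibpoly n \<and> (\<forall>k. 1 \<le> k \<and> k < n \<longrightarrow> \<not> q dvd fibpoly k)}"

lemma fibotomic_eq_prod_primitive_factors: "fibotomic n = \<Prod>(primitive_factors n)"
  by (simp add: fibotomic_def primitive_factors_def)

lemma primitive_factors_subset:
  assumes "n \<ge> 1" shows "primitive_factors n \<subseteq> prime_factors (fibpoly n)"
  using lead_coeff_degree_fibpoly[OF assms]
  by (auto simp: primitive_factors_def in_prime_factors_iff monic_irreducible_imp_prime)

lemma fibotomic_dvd_fibpoly: "n \<ge> 1 \<Longrightarrow> fibotomic n dvd fibpoly n"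
  unfolding fibotomic_eq_prod_primitive_factors
  using primitive_factors_subset by (intro prod_primes_dvd) (auto intro: finite_subset)

lemma lead_coeff_fibotomic: "lead_coeff (fibotomic n) = 1"
  by (simp add: fibotomic_eq_prod_primitive_factors lead_coeff_prod primitive_factors_def)

lemma poly_fibotomic_eq_0_iff_factor:
  assumes "n \<ge> 1"
  shows "poly (cpoly (fibotomic n)) z = 0 \<longleftrightarrow> (\<exists>q\<in>primitive_factors n. poly (cpoly q) z = 0)"
proof -
  have "finite (primitive_factors n)"
    using assms by (intro finite_subset[OF primitive_factors_subset]) auto
  moreover have "poly (cpoly (fibotomic n)) z = (\<Prod>q\<in>primitive_factors n. poly (cpoly q) z)"
    by (simp add: fibotomic_eq_prod_primitive_factors map_poly_of_int_prod poly_prod)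
  ultimately show ?thesis by (simp add: prod_zero_iff)
qed

lemma primitive_factor_root:
  assumes "n \<ge> 1" "q \<in> primitive_factors n" "poly (cpoly q) z = 0"
  shows "\<exists>k\<in>totatives n. z = fib_root n k"
proof -
  have "poly (cpoly (fibpoly n)) z = 0"
    using assms by (auto simp: primitive_factors_def dvd_def map_poly_of_int_mult)
  then obtain k where k: "k \<in> {1..<n}" "z = fib_root n k"
    using poly_fibpoly_eq_0_iff[OF assms(1)] by auto
  show ?thesis
  proof (cases "coprime k n")
    case True
    then show ?thesis using k by (auto simp: in_totatives_iff)
  next
    case False
    obtain d j where "1 \<le> j" "j < d" "d < n" "fib_root n k = fib_root d j"
      by (rule fib_root_reduce[of k n]) (use k False in auto)
    then have "q dvd fibpoly d"
      using assms k poly_fibpoly_eq_0_iff[of d]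
      by (intro irreducible_dvd_of_common_root[of q z]) (auto simp: primitive_factors_def)
    then show ?thesis
      using assms(2) \<open>1 \<le> j\<close> \<open>j < d\<close> \<open>d < n\<close> by (auto simp: primitive_factors_def)
  qed
qed

lemma primitive_factor_of_totative_root:
  assumes "n \<ge> 2" "k \<in> totatives n"
  obtains q where "q \<in> primitive_factors n" "poly (cpoly q) (fib_root n k) = 0"
proof -
  have "poly (cpoly (fibpoly n)) (fib_root n k) = 0"
    using assms totatives_less[of k n] by (intro poly_fibpoly_fib_root) (auto simp: in_totatives_iff)
  then obtain q where q: "prime q" "q dvd fibpoly n" "lead_coeff q = 1" "poly (cpoly q) (fib_root n k) = 0"
    using lead_coeff_degree_fibpoly[of n] assms by (auto elim: monic_prime_factor_with_root)
  have "\<not> q dvd fibpoly d" if "1 \<le> d" "d < n" for d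
  proof
    assume "q dvd fibpoly d"
    then have "poly (cpoly (fibpoly d)) (fib_root n k) = 0"
      using q(4) by (auto simp: dvd_def map_poly_of_int_mult)
    then show False
      using poly_fibpoly_eq_0_iff[of d] that assms(2) fib_root_totative_neq by auto
  qed
  then have "q \<in> primitive_factors n"
    using q by (auto simp: primitive_factors_def prime_elem_imp_irreducible)
  then show thesis using q(4) by (rule that)
qed

lemma poly_fibotomic_eq_0_iff:
  assumes "n \<ge> 2"
  shows "poly (cpoly (fibotomic n)) z = 0 \<longleftrightarrow> (\<exists>k\<in>totatives n. z = fib_root n k)"
  using assms poly_fibotomic_eq_0_iff_factor[of n z]
  by (auto intro: primitive_factor_root elim: primitive_factor_of_totative_root)

lemma cpoly_fibotomic_eq_prod:
  assumes "n \<ge> 2"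
  shows "cpoly (fibotomic n) = (\<Prod>k\<in>totatives n. [:- fib_root n k, 1:])"
proof -
  have "inj_on (fib_root n) {1..<n}"
    using assms by (intro inj_on_subset[OF inj_on_fib_root]) auto
  then have "rsquarefree (cpoly (fibpoly n))"
    using assms by (simp add: cpoly_fibpoly_eq_prod rsquarefree_prod_linear)
  moreover have "cpoly (fibotomic n) dvd cpoly (fibpoly n)"
    using assms by (intro map_poly_of_int_dvd fibotomic_dvd_fibpoly) simp
  ultimately have "rsquarefree (cpoly (fibotomic n))"
    by (rule rsquarefree_dvd)
  then have "Polynomial.smult (lead_coeff (cpoly (fibotomic n)))
      (\<Prod>z | poly (cpoly (fibotomic n)) z = 0. [:- z, 1:]) = cpoly (fibotomic n)"
    by (rule complex_poly_decompose_rsquarefree)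
  moreover have "lead_coeff (cpoly (fibotomic n)) = 1"
    by (simp add: lead_coeff_fibotomic)
  moreover have "{z. poly (cpoly (fibotomic n)) z = 0} = fib_root n ` totatives n"
    using poly_fibotomic_eq_0_iff[OF assms] by auto
  moreover have "inj_on (fib_root n) (totatives n)"
    using assms by (intro inj_on_subset[OF inj_on_fib_root]) (auto simp: totatives_le)
  ultimately show ?thesis by (simp add: prod.reindex)
qed

lemma PsiC_eq_prod: "n \<ge> 2 \<Longrightarrow> PsiC n z = (\<Prod>k\<in>totatives n. z - fib_root n k)"
  by (simp add: PsiC_def cpoly_fibotomic_eq_prod poly_prod_linear_factors)

lemma degree_fibotomic:
  assumes "n \<ge> 2" shows "degree (fibotomic n) = totient n"
proof -
  have "degree (cpoly (fibotomic n)) = card (totatives n)"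
    by (simp only: cpoly_fibotomic_eq_prod[OF assms]) (simp add: degree_prod_eq_sum_degree)
  then show ?thesis by (simp add: totient_def)
qed

lemma of_real_PsiR: "of_real (PsiR n x) = PsiC n (of_real x)"
  by (simp add: PsiR_def PsiC_def of_real_poly_map_poly_of_int)

lemma coprime_double_minus_iff:
  fixes n r :: nat
  assumes "n \<le> r" "r \<le> 2 * n"
  shows "coprime (2 * n - r) n \<longleftrightarrow> coprime r n"
proof -
  have "2 * n - r = n - (r - n)" using assms by linarith
  then have "gcd (2 * n - r) n = gcd (r - n) n"
    using assms by (simp only:) (intro gcd_diff2_nat, linarith)
  also have "\<dots> = gcd r n"
    using assms by (intro gcd_diff1_nat)
  finally show ?thesis by (simp only: coprime_iff_gcd_eq_1)
qed

lemma fib_root_coprime_eq_totative: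
  assumes "n \<ge> 2" "coprime k n"
  obtains j where "j \<in> totatives n" "fib_root n k = fib_root n j"
proof -
  define r where "r = k mod (2 * n)"
  have "fib_root n k = fib_root n r"
    using assms(1) by (simp add: r_def fib_root_mod)
  moreover have "coprime r n"
  proof -
    have "n \<noteq> 0" using assms(1) by simp
    then have "coprime r n \<longleftrightarrow> coprime (r mod n) n" by simp
    also have "r mod n = k mod n" by (simp add: r_def mod_mod_cancel)
    finally show ?thesis using assms(2) \<open>n \<noteq> 0\<close> by simp
  qed
  moreover have "r < 2 * n" using assms(1) by (simp add: r_def)
  moreover have "\<not> coprime 0 n" "\<not> coprime n n" using assms(1) by simp_all
  then have "r \<noteq> 0" "r \<noteq> n" using \<open>coprime r n\<close> by metis+
  ultimately show thesis
  proof (cases "r < n")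
    case True
    then have "r \<in> totatives n" using \<open>coprime r n\<close> \<open>r \<noteq> 0\<close> by (simp add: in_totatives_iff)
    then show thesis using \<open>fib_root n k = fib_root n r\<close> by (rule that)
  next
    case False
    have "coprime (2 * n - r) n"
      using False \<open>r < 2 * n\<close> \<open>coprime r n\<close> by (simp add: coprime_double_minus_iff)
    moreover have "0 < 2 * n - r" "2 * n - r \<le> n" using False \<open>r < 2 * n\<close> by auto
    ultimately have "2 * n - r \<in> totatives n" by (simp add: in_totatives_iff)
    moreover have "fib_root n k = fib_root n (2 * n - r)"
      using \<open>fib_root n k = fib_root n r\<close> fib_root_reflect[of n r] assms(1) \<open>r < 2 * n\<close>
      by simp
    ultimately show thesis by (rule that)
  qed
qed

lemma PsiC_fib_root_eq_0:
  assumes "n \<ge> 2" "coprime k n"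
  shows "PsiC n (fib_root n k) = 0" and "PsiC n (- fib_root n k) = 0"
proof -
  have root: "PsiC n (fib_root n j) = 0" if "coprime j n" for j
    using fib_root_coprime_eq_totative[OF assms(1) that] assms(1)
    by (metis PsiC_eq_prod finite_totatives prod_zero_iff right_minus_eq)
  show "PsiC n (fib_root n k) = 0" using root assms(2) .
  have "coprime (k + n) n" using assms(2) by (metis coprime_iff_gcd_eq_1 gcd_add1)
  then show "PsiC n (- fib_root n k) = 0"
    using root assms(1) by (simp flip: fib_root_add)
qed

lemma poly_eq_lead_coeff_mult_PsiC:
  fixes P :: "complex poly"
  assumes "n \<ge> 2" "degree P = totient n" "\<And>k. k \<in> totatives n \<Longrightarrow> poly P (fib_root n k) = 0"
  shows "poly P z = lead_coeff P * PsiC n z"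
proof -
  have "inj_on (fib_root n) (totatives n)"
    using assms(1) by (intro inj_on_subset[OF inj_on_fib_root]) (auto simp: totatives_le)
  then show ?thesis
    using poly_eq_lead_coeff_prod_roots[of "totatives n" "fib_root n" P z] assms
    by (simp add: PsiC_eq_prod totient_def)
qed

section \<open>Doubling the index\<close>

lemma PsiC_double_even:
  assumes "m \<ge> 2" "even m"
  shows "PsiC m (\<i> * (z ^ 2 + 2)) = \<i> ^ totient m * PsiC (2 * m) z"
proof -
  define P where "P = pcompose (cpoly (fibotomic m)) [:2 * \<i>, 0, \<i>:]"
  have eval: "poly P y = PsiC m (\<i> * (y ^ 2 + 2))" for y
    by (simp add: P_def poly_pcompose PsiC_def algebra_simps power2_eq_square)
  have "degree P = totient (2 * m)"
    using assms by (simp add: P_def degree_pcompose degree_fibotomic totient_double)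
  moreover have "lead_coeff P = \<i> ^ totient m"
    using assms unfolding P_def
    by (subst lead_coeff_comp) (simp_all add: lead_coeff_fibotomic, simp add: degree_fibotomic)
  moreover have "poly P (fib_root (2 * m) k) = 0" if "k \<in> totatives (2 * m)" for k
  proof -
    have "coprime k m" using that by (simp add: in_totatives_iff)
    define c where "c = cos (real k * pi / real (2 * m))"
    have "cos (real k * pi / real m) = cos (2 * (real k * pi / real (2 * m)))"
      using assms by (simp add: field_simps)
    also have "\<dots> = 2 * c ^ 2 - 1"
      unfolding c_def by (rule cos_double_cos)
    finally have cos_double: "cos (real k * pi / real m) = 2 * c ^ 2 - 1" .
    have "- fib_root m k = \<i> * of_real (2 - 4 * c ^ 2)"
      unfolding fib_root_def cos_double by (simp add: algebra_simps)
    moreover have "\<i> * (fib_root (2 * m) k ^ 2 + 2) = \<i> * of_real (2 - 4 * c ^ 2)"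
      unfolding fib_root_square c_def[symmetric] by simp
    ultimately have "\<i> * (fib_root (2 * m) k ^ 2 + 2) = - fib_root m k" by simp
    then show ?thesis
      using eval PsiC_fib_root_eq_0(2)[OF assms(1) \<open>coprime k m\<close>] by simp
  qed
  ultimately show ?thesis
    using poly_eq_lead_coeff_mult_PsiC[of "2 * m" P z] assms eval by simp
qed

definition half_totatives :: "nat \<Rightarrow> nat set" where
  "half_totatives n = {k \<in> totatives n. 2 * k < n}"

lemma coprime_minus_iff: "k \<le> n \<Longrightarrow> coprime (n - k) n \<longleftrightarrow> coprime k (n :: nat)"
  by (simp only: coprime_iff_gcd_eq_1 gcd_diff2_nat)

lemma totatives_split_half:
  assumes "n \<ge> 3"
  shows "totatives n = half_totatives n \<union> (\<lambda>k. n - k) ` half_totatives n"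
    and "half_totatives n \<inter> (\<lambda>k. n - k) ` half_totatives n = {}"
    and "inj_on (\<lambda>k. n - k) (half_totatives n)"
proof -
  have not_half: "2 * k \<noteq> n" if "k \<in> totatives n" for k
  proof
    assume "2 * k = n"
    then have "k dvd n" by auto
    with that have "k = 1" by (auto simp: in_totatives_iff)
    with \<open>2 * k = n\<close> assms show False by simp
  qed
  show "totatives n = half_totatives n \<union> (\<lambda>k. n - k) ` half_totatives n"
  proof (intro equalityI subsetI)
    fix k assume k: "k \<in> totatives n"
    show "k \<in> half_totatives n \<union> (\<lambda>k. n - k) ` half_totatives n"
    proof (cases "2 * k < n")
      case True
      then show ?thesis using k by (simp add: half_totatives_def)
    next
      case False
      then have "n - k \<in> half_totatives n" "k = n - (n - k)"
        using k not_half[OF k] coprime_minus_iff[of k n] totatives_less[OF k] assms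
        by (auto simp: half_totatives_def in_totatives_iff)
      then show ?thesis by blast
    qed
  next
    fix k assume "k \<in> half_totatives n \<union> (\<lambda>k. n - k) ` half_totatives n"
    then show "k \<in> totatives n"
      using coprime_minus_iff by (auto simp: half_totatives_def in_totatives_iff)
  qed
  show "half_totatives n \<inter> (\<lambda>k. n - k) ` half_totatives n = {}"
    by (auto simp: half_totatives_def)
  show "inj_on (\<lambda>k. n - k) (half_totatives n)"
    by (rule inj_onI) (auto simp: half_totatives_def)
qed

lemma totient_eq_twice_card_half_totatives:
  assumes "n \<ge> 3" shows "totient n = 2 * card (half_totatives n)"
proof -
  have "totient n = card (half_totatives n \<union> (\<lambda>k. n - k) ` half_totatives n)"
    unfolding totient_def using totatives_split_half(1)[OF assms] by (rule arg_cong)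
  also have "\<dots> = card (half_totatives n) + card ((\<lambda>k. n - k) ` half_totatives n)"
    using totatives_split_half(2)[OF assms] by (intro card_Un_disjoint) (simp_all add: half_totatives_def)
  also have "\<dots> = 2 * card (half_totatives n)"
    using totatives_split_half(3)[OF assms] by (simp add: card_image)
  finally show ?thesis .
qed

lemma PsiC_eq_prod_half_totatives:
  assumes "n \<ge> 3"
  shows "PsiC n z = (\<Prod>k\<in>half_totatives n. z ^ 2 - fib_root n k ^ 2)"
proof -
  have fin: "finite (half_totatives n)" by (simp add: half_totatives_def)
  have "PsiC n z = (\<Prod>k\<in>half_totatives n. z - fib_root n k)
      * (\<Prod>k\<in>(\<lambda>k. n - k) ` half_totatives n. z - fib_root n k)"
    using assms totatives_split_half[OF assms] fin by (simp add: PsiC_eq_prod prod.union_disjoint)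
  also have "(\<Prod>k\<in>(\<lambda>k. n - k) ` half_totatives n. z - fib_root n k)
      = (\<Prod>k\<in>half_totatives n. z + fib_root n k)"
    using totatives_split_half(3)[OF assms] assms
    by (simp add: prod.reindex fib_root_complement half_totatives_def)
  finally show ?thesis
    by (simp add: power2_eq_square algebra_simps flip: prod.distrib)
qed

lemma bij_betw_half_totatives_double:
  assumes "odd m"
  shows "bij_betw (\<lambda>k. m - 2 * k) (half_totatives m) (half_totatives (2 * m))"
proof (rule bij_betw_byWitness[where f' = "\<lambda>l. (m - l) div 2"])
  show "\<forall>k\<in>half_totatives m. (m - (m - 2 * k)) div 2 = k"
    by (auto simp: half_totatives_def)
  show "\<forall>l\<in>half_totatives (2 * m). m - 2 * ((m - l) div 2) = l"
    using assms by (auto simp: half_totatives_def in_totatives_iff elim: oddE)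
  show "(\<lambda>k. m - 2 * k) ` half_totatives m \<subseteq> half_totatives (2 * m)"
  proof
    fix l assume "l \<in> (\<lambda>k. m - 2 * k) ` half_totatives m"
    then obtain k where k: "k \<in> totatives m" "2 * k < m" "l = m - 2 * k"
      by (auto simp: half_totatives_def)
    have "coprime (2 * k) m" using k(1) assms by (simp add: in_totatives_iff)
    then have "coprime l m" using k coprime_minus_iff[of "2 * k" m] by simp
    moreover have "odd l" using k assms by simp
    ultimately show "l \<in> half_totatives (2 * m)"
      using k by (auto simp: half_totatives_def in_totatives_iff)
  qed
  show "(\<lambda>l. (m - l) div 2) ` half_totatives (2 * m) \<subseteq> half_totatives m"
  proof
    fix k assume "k \<in> (\<lambda>l. (m - l) div 2) ` half_totatives (2 * m)"
    then obtain l where l: "l \<in> totatives (2 * m)" "l < m" "k = (m - l) div 2"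
      by (auto simp: half_totatives_def)
    have "odd l" "coprime l m" using l(1) by (auto simp: in_totatives_iff)
    then have "2 * k = m - l" using l assms by simp
    moreover have "coprime (m - l) m" using \<open>coprime l m\<close> l(2) coprime_minus_iff by simp
    ultimately have "coprime k m" by (metis coprime_mult_left_iff)
    moreover have "0 < k" using \<open>2 * k = m - l\<close> l(2) by simp
    ultimately show "k \<in> half_totatives m"
      using \<open>2 * k = m - l\<close> l assms by (auto simp: half_totatives_def in_totatives_iff)
  qed
qed

lemma PsiC_double_odd:
  fixes x :: real
  assumes "odd m" "m \<ge> 3"
  shows "PsiC m (\<i> * of_real (sqrt (x ^ 2 + 4)))
    = (-1) ^ card (half_totatives m) * PsiC (2 * m) (of_real x)"
proof -
  define g :: "nat \<Rightarrow> complex"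
    where "g l = of_real (x ^ 2 + 4 * cos (real l * pi / real (2 * m)) ^ 2)" for l
  have "(\<i> * of_real (sqrt (x ^ 2 + 4))) ^ 2 - fib_root m k ^ 2 = - g (m - 2 * k)"
    if "2 * k < m" for k
  proof -
    have "real (m - 2 * k) * pi / real (2 * m) = pi / 2 - real k * pi / real m"
      using that assms by (simp add: of_nat_diff field_simps)
    then have cos_sq: "cos (real (m - 2 * k) * pi / real (2 * m)) ^ 2 = 1 - cos (real k * pi / real m) ^ 2"
      by (simp add: cos_diff sin_squared_eq)
    have "- g (m - 2 * k) = of_real (- (x ^ 2 + 4) + 4 * cos (real k * pi / real m) ^ 2)"
      unfolding g_def cos_sq by (simp add: algebra_simps)
    moreover have "sqrt (x ^ 2 + 4) ^ 2 = x ^ 2 + 4" by simp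
    then have "(\<i> * of_real (sqrt (x ^ 2 + 4))) ^ 2 - fib_root m k ^ 2
        = of_real (- (x ^ 2 + 4) + 4 * cos (real k * pi / real m) ^ 2)"
      by (simp add: fib_root_square power_mult_distrib flip: of_real_power)
    ultimately show ?thesis by simp
  qed
  then have "PsiC m (\<i> * of_real (sqrt (x ^ 2 + 4))) = (\<Prod>k\<in>half_totatives m. - g (m - 2 * k))"
    using assms by (simp add: PsiC_eq_prod_half_totatives half_totatives_def)
  also have "\<dots> = (-1) ^ card (half_totatives m) * (\<Prod>l\<in>half_totatives (2 * m). g l)"
    using prod.reindex_bij_betw[OF bij_betw_half_totatives_double[OF assms(1)], of g]
    by (simp add: prod_uminus)
  also have "(\<Prod>l\<in>half_totatives (2 * m). g l) = PsiC (2 * m) (of_real x)"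
    using assms by (simp add: PsiC_eq_prod_half_totatives g_def fib_root_square)
  finally show ?thesis .
qed

section \<open>Multiplying the index by an odd prime\<close>

lemma poly_fibpoly_double_prime:
  assumes "prime p" "odd p"
  shows "poly (cpoly (fibpoly (2 * p))) z = z * poly (cpoly (fibpoly p)) z * PsiC (2 * p) z"
proof -
  txt \<open>The indices \<open>0 < k < 2p\<close> split into \<open>p\<close> (the root \<open>0\<close>), the even ones (the roots of
    \<open>F\<^sub>p\<close>) and the totatives of \<open>2p\<close>.\<close>
  have p: "p \<ge> 2" using prime_ge_2_nat[OF assms(1)] .
  have tot: "k \<in> totatives (2 * p) \<longleftrightarrow> 0 < k \<and> k < 2 * p \<and> odd k \<and> k \<noteq> p" for k
  proof -
    have "coprime k p \<longleftrightarrow> \<not> p dvd k"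
      using assms(1)
      by (metis coprime_commute coprime_common_divisor dvd_refl not_prime_unit prime_imp_coprime)
    moreover have "0 < k \<Longrightarrow> k < 2 * p \<Longrightarrow> p dvd k \<longleftrightarrow> k = p"
      by (auto elim!: dvdE)
    ultimately show ?thesis
      using p by (auto simp: in_totatives_iff le_less)
  qed
  have "k \<in> (*) 2 ` {1..<p}" if "even k" "1 \<le> k" "k < 2 * p" for k
    using that by (auto elim!: evenE)
  then have split: "{1..<2 * p} = insert p ((*) 2 ` {1..<p} \<union> totatives (2 * p))"
    using p by (auto simp: tot)
  have disjoint: "p \<notin> (*) 2 ` {1..<p} \<union> totatives (2 * p)"
    "(*) 2 ` {1..<p} \<inter> totatives (2 * p) = {}"
    using assms(2) by (auto simp: tot)
  have "poly (cpoly (fibpoly (2 * p))) z = (\<Prod>k\<in>{1..<2 * p}. z - fib_root (2 * p) k)"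
    using p by (intro poly_fibpoly_eq_prod) simp
  also have "\<dots> = (z - fib_root (2 * p) p) * ((\<Prod>k\<in>(*) 2 ` {1..<p}. z - fib_root (2 * p) k)
        * (\<Prod>k\<in>totatives (2 * p). z - fib_root (2 * p) k))"
    unfolding split using disjoint by (simp add: prod.union_disjoint)
  also have "(\<Prod>k\<in>(*) 2 ` {1..<p}. z - fib_root (2 * p) k)
      = (\<Prod>j\<in>{1..<p}. z - fib_root (2 * p) (2 * j))"
    by (subst prod.reindex) (auto simp: inj_on_def)
  also have "\<dots> = poly (cpoly (fibpoly p)) z"
    using p fib_root_scale[of 2 p] by (simp add: poly_fibpoly_eq_prod mult.commute)
  also have "fib_root (2 * p) p = 0"
    using p by (simp add: fib_root_def)
  finally show ?thesis using p by (simp add: PsiC_eq_prod)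
qed

text \<open>Only for odd primes \<open>p\<close> is \<open>x \<Psi>\<^sub>2\<^sub>p(x)\<close> the Lucas polynomial \<open>L\<^sub>p\<close>,
  see \<open>poly_lucas_poly_Binet\<close>.\<close>

definition lucas_poly :: "nat \<Rightarrow> complex poly" where
  "lucas_poly p = [:0, 1:] * cpoly (fibotomic (2 * p))"

lemma poly_lucas_poly: "poly (lucas_poly p) y = y * PsiC (2 * p) y"
  by (simp add: lucas_poly_def PsiC_def)

lemma degree_lead_coeff_lucas_poly:
  assumes "prime p" "odd p"
  shows "degree (lucas_poly p) = p" and "lead_coeff (lucas_poly p) = 1"
proof -
  have p: "p \<ge> 2" using prime_ge_2_nat[OF assms(1)] .
  have lead: "lead_coeff (cpoly (fibotomic (2 * p))) = 1"
    by (simp add: lead_coeff_fibotomic)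
  then have "cpoly (fibotomic (2 * p)) \<noteq> 0" by (metis coeff_0 zero_neq_one)
  moreover have "degree (cpoly (fibotomic (2 * p))) = p - 1"
    using p assms by (simp add: degree_fibotomic totient_double totient_prime)
  ultimately show "degree (lucas_poly p) = p"
    using p by (simp add: lucas_poly_def degree_mult_eq)
  have "lead_coeff (lucas_poly p) = lead_coeff [:0, 1:] * lead_coeff (cpoly (fibotomic (2 * p)))"
    unfolding lucas_poly_def by (rule lead_coeff_mult)
  then show "lead_coeff (lucas_poly p) = 1" by (simp only: lead) simp
qed

lemma poly_lucas_poly_Binet:
  fixes w v :: complex
  assumes "prime p" "odd p" "w * v = -1" "w \<noteq> v" "w ^ p \<noteq> v ^ p"
  shows "poly (lucas_poly p) (w + v) = w ^ p + v ^ p"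
proof -
  let ?F = "\<lambda>n. poly (cpoly (fibpoly n)) (w + v)"
  have "poly (lucas_poly p) (w + v) * (w ^ p - v ^ p)
      = (w + v) * PsiC (2 * p) (w + v) * (?F p * (w - v))"
    using fibpoly_Binet[OF assms(3), of p] by (simp add: poly_lucas_poly)
  also have "\<dots> = ?F (2 * p) * (w - v)"
    using poly_fibpoly_double_prime[OF assms(1,2)] by (simp add: ac_simps)
  also have "\<dots> = (w ^ p + v ^ p) * (w ^ p - v ^ p)"
    using fibpoly_Binet[OF assms(3), of "2 * p"] by (simp add: power_mult algebra_simps power2_eq_square)
  finally show ?thesis using assms(5) by simp
qed

lemma sin_pi_ratio_neq_0:
  assumes "m > 0" "\<not> m dvd j"
  shows "sin (real j * pi / real m) \<noteq> 0"
proof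
  assume "sin (real j * pi / real m) = 0"
  then obtain i :: int where "real j * pi / real m = of_int i * pi"
    by (auto simp: sin_zero_iff_int2)
  then have "real j = of_int i * real m" using assms(1) by (simp add: field_simps)
  then have "int j = i * int m" by (metis of_int_eq_iff of_int_mult of_int_of_nat_eq)
  then have "m dvd j" by (metis dvd_triv_right int_dvd_int_iff)
  with assms(2) show False ..
qed

lemma poly_lucas_poly_fib_root:
  assumes "prime p" "odd p" "0 < k" "k < N" "sin (real p * (real k * pi / real N)) \<noteq> 0"
  shows "poly (lucas_poly p) (fib_root N k) = \<i> ^ p * of_real (2 * cos (real p * (real k * pi / real N)))"
proof -
  define t where "t = real k * pi / real N"
  have "sin t > 0" unfolding t_def using assms(3,4) by (intro sin_gt_zero) (auto simp: field_simps)
  then have "\<i> * cis t \<noteq> \<i> * cis (- t)" using i_cis_pair(3)[of t] by auto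
  moreover have "(\<i> * cis t) ^ p \<noteq> (\<i> * cis (- t)) ^ p"
    using i_cis_pair(4)[of t p] assms(5) by (auto simp: t_def)
  ultimately show ?thesis
    using poly_lucas_poly_Binet[OF assms(1,2) i_cis_pair(1)] i_cis_pair(5)[of t p]
    by (simp add: fib_root_eq_i_cis_pair t_def)
qed

lemma PsiC_i_power_cos_eq_0:
  assumes "odd p" "m \<ge> 2" "coprime j m"
  shows "PsiC m (\<i> ^ p * of_real (2 * cos (real j * pi / real m))) = 0"
proof -
  obtain q where "p = 2 * q + 1" using assms(1) oddE by blast
  then have "\<i> ^ p = \<i> \<or> \<i> ^ p = - \<i>" by (cases "even q") (auto simp: power_mult power_add)
  then show ?thesis
    using PsiC_fib_root_eq_0[OF assms(2,3)] by (auto simp: fib_root_def)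
qed

lemma PsiC_lucas_poly_fib_root_eq_0:
  assumes "prime p" "odd p" "m \<ge> 2" "0 < k" "k < p * m" "coprime k m"
  shows "PsiC m (poly (lucas_poly p) (fib_root (p * m) k)) = 0"
proof -
  have p: "p > 0" using prime_gt_0_nat[OF assms(1)] .
  have angle: "real p * (real k * pi / real (p * m)) = real k * pi / real m" using p by simp
  have "\<not> m dvd k"
  proof
    assume "m dvd k"
    then have "is_unit m" using assms(6) by (metis coprime_common_divisor dvd_refl)
    with assms(3) show False by simp
  qed
  then have "sin (real k * pi / real m) \<noteq> 0" using assms(3) by (intro sin_pi_ratio_neq_0) auto
  then have "poly (lucas_poly p) (fib_root (p * m) k) = \<i> ^ p * of_real (2 * cos (real k * pi / real m))"
    by (rule poly_lucas_poly_fib_root[OF assms(1,2,4,5), unfolded angle])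
  then show ?thesis using PsiC_i_power_cos_eq_0[OF assms(2,3,6)] by simp
qed

lemma fibotomic_pcompose_lucas_poly:
  assumes "prime p" "odd p" "m \<ge> 2"
  defines "P \<equiv> pcompose (cpoly (fibotomic m)) (lucas_poly p)"
  shows "degree P = totient m * p" and "lead_coeff P = 1"
    and "poly P z = PsiC m (poly (lucas_poly p) z)"
proof -
  have p: "p \<ge> 2" using prime_ge_2_nat[OF assms(1)] .
  show "degree P = totient m * p"
    using assms by (simp add: P_def degree_pcompose degree_fibotomic degree_lead_coeff_lucas_poly)
  show "lead_coeff P = 1"
    using p degree_lead_coeff_lucas_poly[OF assms(1,2)] unfolding P_def
    by (subst lead_coeff_comp) (simp_all add: lead_coeff_fibotomic)
  show "poly P z = PsiC m (poly (lucas_poly p) z)"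
    by (simp add: P_def poly_pcompose PsiC_def)
qed

lemma PsiC_lucas_poly_dvd:
  assumes "prime p" "odd p" "m \<ge> 2" "p dvd m"
  shows "PsiC m (poly (lucas_poly p) z) = PsiC (p * m) z"
proof -
  define P where "P = pcompose (cpoly (fibotomic m)) (lucas_poly p)"
  note P = fibotomic_pcompose_lucas_poly[OF assms(1-3), folded P_def]
  have p: "p \<ge> 2" using prime_ge_2_nat[OF assms(1)] .
  have "totient (p * m) = totient m * p"
    using assms(4) p by (simp add: totient_mult gcd_nat.absorb1)
  moreover have "poly P (fib_root (p * m) k) = 0" if "k \<in> totatives (p * m)" for k
  proof -
    have "2 * 1 \<le> p * m" using p assms(3) by (intro mult_le_mono) auto
    then have "0 < k" "k < p * m" "coprime k m"
      using that totatives_less[OF that] by (auto simp: in_totatives_iff)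
    then show ?thesis using P(3) PsiC_lucas_poly_fib_root_eq_0[OF assms(1-3)] by simp
  qed
  moreover have "2 * 1 \<le> p * m" using p assms(3) by (intro mult_le_mono) auto
  ultimately have "poly P z = lead_coeff P * PsiC (p * m) z"
    using P(1) by (intro poly_eq_lead_coeff_mult_PsiC) auto
  then show ?thesis using P by simp
qed

lemma totatives_disjoint_multiples:
  "p \<noteq> 1 \<Longrightarrow> totatives (p * m) \<inter> (*) p ` totatives m = {}"
  by (auto simp: in_totatives_iff)

lemma card_totatives_union_multiples:
  assumes "prime p" "\<not> p dvd m"
  shows "card (totatives (p * m) \<union> (*) p ` totatives m) = totient m * p"
proof -
  have p: "p \<ge> 2" using prime_ge_2_nat[OF assms(1)] .
  have "inj_on ((*) p) (totatives m)" using p by (auto simp: inj_on_def)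
  then have "card (totatives (p * m) \<union> (*) p ` totatives m) = totient (p * m) + totient m"
    using totatives_disjoint_multiples[of p m] p by (simp add: card_Un_disjoint card_image totient_def)
  also have "\<dots> = (p - 1) * totient m + totient m"
    using assms by (simp add: totient_mult_coprime totient_prime prime_imp_coprime)
  also have "\<dots> = totient m * p"
    using p by (cases p) simp_all
  finally show ?thesis .
qed

lemma PsiC_lucas_poly_not_dvd:
  assumes "prime p" "odd p" "m \<ge> 2" "\<not> p dvd m"
  shows "PsiC m (poly (lucas_poly p) z) = PsiC (p * m) z * PsiC m z"
proof -
  define P where "P = pcompose (cpoly (fibotomic m)) (lucas_poly p)"
  note P = fibotomic_pcompose_lucas_poly[OF assms(1-3), folded P_def]
  define K where "K = totatives (p * m) \<union> (*) p ` totatives m"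
  have p: "p \<ge> 2" using prime_ge_2_nat[OF assms(1)] .
  have "2 * 1 \<le> p * m" using p assms(3) by (intro mult_le_mono) auto
  have K: "0 < k \<and> k < p * m \<and> coprime k m" if k: "k \<in> K" for k
  proof (cases "k \<in> totatives (p * m)")
    case True
    then show ?thesis using totatives_less[OF True] \<open>2 * 1 \<le> p * m\<close> by (auto simp: in_totatives_iff)
  next
    case False
    then obtain j where "j \<in> totatives m" "k = p * j" using k by (auto simp: K_def)
    moreover have "j < m" using totatives_less[OF \<open>j \<in> totatives m\<close>] assms(3) by simp
    ultimately show ?thesis using prime_imp_coprime[OF assms(1,4)] p by (auto simp: in_totatives_iff)
  qed
  have "inj_on (fib_root (p * m)) K"
    using K p assms(3) by (intro inj_on_subset[OF inj_on_fib_root]) (auto simp: less_imp_le)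
  moreover have "card K = degree P"
    using card_totatives_union_multiples[OF assms(1,4)] P(1) by (simp add: K_def)
  moreover have "poly P (fib_root (p * m) k) = 0" if "k \<in> K" for k
    using K[OF that] P(3) PsiC_lucas_poly_fib_root_eq_0[OF assms(1-3)] by simp
  ultimately have "poly P z = lead_coeff P * (\<Prod>k\<in>K. z - fib_root (p * m) k)"
    by (intro poly_eq_lead_coeff_prod_roots) (simp_all add: K_def)
  also have "\<dots> = PsiC (p * m) z * (\<Prod>k\<in>(*) p ` totatives m. z - fib_root (p * m) k)"
    using P(2) totatives_disjoint_multiples[of p m] p \<open>2 * 1 \<le> p * m\<close>
    by (simp add: K_def prod.union_disjoint PsiC_eq_prod)
  also have "(\<Prod>k\<in>(*) p ` totatives m. z - fib_root (p * m) k) = PsiC m z"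
    using p assms(3) fib_root_scale[of p m]
    by (subst prod.reindex) (auto simp: inj_on_def PsiC_eq_prod mult.commute)
  finally show ?thesis using P(3) by simp
qed

section \<open>Real arguments\<close>

lemma omega_pos: "omega x > 0"
proof -
  have "sqrt (x ^ 2 + 4) > sqrt (x ^ 2)" by (intro real_sqrt_less_mono) simp
  then show ?thesis by (simp add: omega_def)
qed

lemma inverse_omega: "inverse (omega x) = (sqrt (x ^ 2 + 4) - x) / 2"
proof -
  have "omega x * ((sqrt (x ^ 2 + 4) - x) / 2) = (sqrt (x ^ 2 + 4) ^ 2 - x ^ 2) / 4"
    by (simp add: omega_def field_simps power2_eq_square)
  also have "\<dots> = 1" by simp
  finally show ?thesis by (metis inverse_unique)
qed

lemma omega_minus_inverse: "omega x - inverse (omega x) = x"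
  by (simp only: inverse_omega) (simp add: omega_def field_simps)

lemma omega_plus_inverse: "omega x + inverse (omega x) = sqrt (x ^ 2 + 4)"
  by (simp only: inverse_omega) (simp add: omega_def field_simps)

lemma omega_square_plus_inverse: "omega x ^ 2 + inverse (omega x ^ 2) = x ^ 2 + 2"
proof -
  have "x ^ 2 = (omega x - inverse (omega x)) ^ 2" by (simp add: omega_minus_inverse)
  also have "\<dots> = omega x ^ 2 + inverse (omega x) ^ 2 - 2"
    using omega_pos[of x] by (simp add: power2_eq_square field_simps)
  finally show ?thesis by (simp add: power_inverse)
qed

lemma i_mult_minus_inverse:
  fixes c :: real
  assumes "c \<noteq> 0"
  shows "\<i> * of_real c - inverse (\<i> * of_real c) = \<i> * of_real (c + inverse c)"
  using assms by (simp add: field_simps)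

lemma x_PsiR_double_prime:
  assumes "prime p" "odd p"
  shows "x * PsiR (2 * p) x = omega x ^ p - inverse (omega x ^ p)"
proof -
  define w where "w = complex_of_real (omega x)"
  define v where "v = complex_of_real (- inverse (omega x))"
  have pos: "omega x > 0" by (rule omega_pos)
  have wv: "w * v = -1" using pos by (simp add: w_def v_def)
  have "w + v = of_real (omega x - inverse (omega x))" by (simp add: w_def v_def)
  then have sum: "w + v = of_real x" by (simp only: omega_minus_inverse)
  have "omega x \<noteq> - inverse (omega x)"
    using pos by (smt (verit) inverse_positive_iff_positive)
  then have "w \<noteq> v" unfolding w_def v_def of_real_eq_iff .
  have vp: "v ^ p = - of_real (inverse (omega x) ^ p)"
    using assms(2) by (simp add: v_def)
  have "w ^ p - v ^ p = of_real (omega x ^ p + inverse (omega x) ^ p)"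
    by (simp add: w_def vp)
  moreover have "omega x ^ p + inverse (omega x) ^ p > 0" using pos by (simp add: add_pos_pos)
  ultimately have "w ^ p \<noteq> v ^ p" by (metis less_irrefl of_real_eq_0_iff right_minus_eq)
  have "of_real (x * PsiR (2 * p) x) = poly (lucas_poly p) (w + v)"
    by (simp add: sum poly_lucas_poly of_real_PsiR)
  also have "\<dots> = w ^ p + v ^ p"
    by (rule poly_lucas_poly_Binet[OF assms wv \<open>w \<noteq> v\<close> \<open>w ^ p \<noteq> v ^ p\<close>])
  also have "\<dots> = of_real (omega x ^ p - inverse (omega x ^ p))"
    by (simp add: w_def vp power_inverse)
  finally show ?thesis by (simp only: of_real_eq_iff)
qed

lemma PsiR_4: "of_real (PsiR 4 x) = - \<i> * PsiC 2 (\<i> * of_real (x ^ 2 + 2))"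
proof -
  have "- \<i> * (\<i> * of_real (PsiR 4 x)) = - \<i> * PsiC 2 (\<i> * of_real (x ^ 2 + 2))"
    using PsiC_double_even[of 2 "of_real x"] by (simp add: of_real_PsiR)
  then show ?thesis by simp
qed

lemma PsiR_double_even:
  assumes "m \<ge> 3" "even m"
  shows "of_real (PsiR (2 * m) x) = \<i> ^ totient m * PsiC m (\<i> * of_real (x ^ 2 + 2))"
proof -
  have "even (totient m)" using assms by (intro totient_even) simp
  then have unit: "\<i> ^ totient m * \<i> ^ totient m = (1 :: complex)" by simp
  have "\<i> ^ totient m * (\<i> ^ totient m * of_real (PsiR (2 * m) x))
      = \<i> ^ totient m * PsiC m (\<i> * of_real (x ^ 2 + 2))"
    using PsiC_double_even[of m "of_real x"] assms by (simp add: of_real_PsiR)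
  then show ?thesis by (simp only: mult.assoc[symmetric] unit mult_1_left)
qed

lemma PsiR_double_odd:
  assumes "odd m" "m \<ge> 3"
  shows "of_real (PsiR (2 * m) x) = \<i> ^ totient m * PsiC m (\<i> * of_real (sqrt (x ^ 2 + 4)))"
proof -
  have "\<i> ^ totient m = ((-1) ^ card (half_totatives m) :: complex)"
    using totient_eq_twice_card_half_totatives[OF assms(2)] by (simp add: power_mult)
  then show ?thesis
    using PsiC_double_odd[OF assms, of x] by (simp add: of_real_PsiR flip: power_mult_distrib)
qed

lemma PsiR_prime_mult_dvd:
  assumes "prime p" "odd p" "m \<ge> 2" "p dvd m"
  shows "PsiR (p * m) x = PsiR m (x * PsiR (2 * p) x)"
  using PsiC_lucas_poly_dvd[OF assms, of "of_real x"]
  by (simp add: poly_lucas_poly flip: of_real_PsiR of_real_mult)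

lemma PsiR_prime_mult_not_dvd:
  assumes "prime p" "odd p" "m \<ge> 2" "\<not> p dvd m" "PsiR m x \<noteq> 0"
  shows "PsiR (p * m) x = PsiR m (x * PsiR (2 * p) x) / PsiR m x"
proof -
  have "PsiR m (x * PsiR (2 * p) x) = PsiR (p * m) x * PsiR m x"
    using PsiC_lucas_poly_not_dvd[OF assms(1-4), of "of_real x"]
    by (simp add: poly_lucas_poly flip: of_real_PsiR of_real_mult)
  then show ?thesis using assms(5) by simp
qed

lemma i_mult_omega_minus_inverse:
  "\<i> * of_real (omega x) - inverse (\<i> * of_real (omega x)) = \<i> * of_real (sqrt (x ^ 2 + 4))"
  "\<i> * of_real (omega x ^ 2) - inverse (\<i> * of_real (omega x ^ 2)) = \<i> * of_real (x ^ 2 + 2)"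
  using i_mult_minus_inverse[of "omega x"] i_mult_minus_inverse[of "omega x ^ 2"] omega_pos[of x]
  by (simp_all only: omega_plus_inverse omega_square_plus_inverse) simp_all

theorem mainTheorem6:
  fixes p m :: nat and x :: real
  assumes "prime p" and "m \<ge> 2"
  shows
   "(p = 2 \<and> 2 dvd m \<and> m = 2 \<longrightarrow>
       complex_of_real (PsiR (2 * m) x)
         = - (\<i> ^ totient m) * PsiC m (\<i> * complex_of_real (omega x ^ 2)
                                      - inverse (\<i> * complex_of_real (omega x ^ 2)))
     \<and> complex_of_real (PsiR (2 * m) x)
         = - (\<i> ^ totient m) * PsiC m (\<i> * complex_of_real (x ^ 2 + 2)))
  \<and> (p = 2 \<and> 2 dvd m \<and> m \<ge> 3 \<longrightarrow>
       complex_of_real (PsiR (2 * m) x)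
         = (\<i> ^ totient m) * PsiC m (\<i> * complex_of_real (omega x ^ 2)
                                      - inverse (\<i> * complex_of_real (omega x ^ 2)))
     \<and> complex_of_real (PsiR (2 * m) x)
         = (\<i> ^ totient m) * PsiC m (\<i> * complex_of_real (x ^ 2 + 2)))
  \<and> (p = 2 \<and> \<not> 2 dvd m \<longrightarrow>
       complex_of_real (PsiR (2 * m) x)
         = (\<i> ^ totient m) * PsiC m (\<i> * complex_of_real (omega x)
                                      - inverse (\<i> * complex_of_real (omega x)))
     \<and> complex_of_real (PsiR (2 * m) x)
         = (\<i> ^ totient m) * PsiC m (\<i> * complex_of_real (sqrt (x ^ 2 + 4))))
  \<and> (p > 2 \<and> p dvd m \<longrightarrow>
       PsiR (p * m) x = PsiR m (omega x ^ p - inverse (omega x ^ p))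
     \<and> PsiR (p * m) x = PsiR m (x * PsiR (2 * p) x))
  \<and> (p > 2 \<and> \<not> p dvd m \<and> PsiR m x \<noteq> 0 \<longrightarrow>
       PsiR (p * m) x = PsiR m (omega x ^ p - inverse (omega x ^ p))
                        / PsiR m (omega x - inverse (omega x))
     \<and> PsiR (p * m) x = PsiR m (x * PsiR (2 * p) x) / PsiR m x)"
proof -
  have odd_p: "odd p" if "p > 2" using prime_odd_nat assms(1) that by blast
  have m3: "m \<ge> 3" if "odd m" using that assms(2) by (cases "m = 2") auto
  show ?thesis
    unfolding i_mult_omega_minus_inverse omega_minus_inverse
    by (intro conjI impI; elim conjE;
        simp add: PsiR_4 PsiR_double_even PsiR_double_odd m3
          PsiR_prime_mult_dvd[OF assms(1) odd_p assms(2)]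
          PsiR_prime_mult_not_dvd[OF assms(1) odd_p assms(2)]
          flip: x_PsiR_double_prime[OF assms(1) odd_p])
qed

end
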